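(* Let $N\ge 1$ and $p_0,p_1,\ldots,p_{N-1}\in\mathbb{N}$, let $k$ be a nonnegative integer and $x$ a nonnegative integer. Then $$\mathbf{d}_{p_0p_1\cdots p_{N-1}}(k,x)=\sum_{h=0}^{N-1}\mathbf{d}_{p_h}\!\left(k,\ \frac{x}{\left(\prod_{m=0}^{h-1}p_m\right)^{k+1}\left(\prod_{n=h+1}^{N-1}p_n\right)^{k}}\right)\prod_{j=0}^{h-1}p_j ,$$ where empty products equal $1$.
   Context: For an integer $p\ge 2$, an integer $k\ge 0$ and a real number $x\ge 0$, the digit function is $\mathbf{d}_p(k,x)=\lfloor x/p^k\rfloor-p\lfloor x/p^{k+1}\rfloor$ (for integer $x$ this is the $k$-th digit of $x$ in radix $p$); by convention $\mathbf{d}_1(k,x)=0$ for all $k,x$. *)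

theory Defs
  imports Complex_Main
begin

definition digit :: "nat \<Rightarrow> nat \<Rightarrow> real \<Rightarrow> int" where
  "digit p k x = (if p = 1 then 0
     else \<lfloor>x / real p ^ k\<rfloor> - int p * \<lfloor>x / real p ^ (k + 1)\<rfloor>)"

end

theory Submission
  imports Defs
begin

text \<open>Put \<open>P = p\<^sub>0\<cdots>p\<^sub>N\<^sub>-\<^sub>1\<close>, \<open>Q\<^sub>h = p\<^sub>0\<cdots>p\<^sub>h\<^sub>-\<^sub>1\<close> and \<open>z = \<lfloor>x / P\<^sup>k\<rfloor>\<close>.
  For natural arguments every digit is a remainder of an integer quotient: \<open>d\<^sub>P(k,x) = z mod P\<close>,
  and since the \<open>h\<close>-th argument times \<open>p\<^sub>h\<^sup>k\<close> is \<open>x / (P\<^sup>k Q\<^sub>h)\<close>, its digit is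
  \<open>\<lfloor>z / Q\<^sub>h\<rfloor> mod p\<^sub>h\<close>. The identity is thus the mixed-radix expansion of \<open>z mod P\<close>
  with respect to the radices \<open>p\<^sub>0, \<dots>, p\<^sub>N\<^sub>-\<^sub>1\<close>.
  With the conventions \<open>y / 0 = 0\<close> and \<open>n div 0 = 0\<close> this holds for all \<open>p\<close>.\<close>

lemma digit_eq_floor: "digit p k y = \<lfloor>y / real p ^ k\<rfloor> - int p * \<lfloor>y / real p ^ (k + 1)\<rfloor>"
  unfolding digit_def by simp

lemma digit_of_nat_div:
  "digit p k (real x / real c) = int (x div (c * p ^ k) mod p)"
proof -
  define a where "a = x div (c * p ^ k)"
  have "\<lfloor>real x / real c / real p ^ k\<rfloor> = int a"
    unfolding a_def by (metis floor_divide_of_nat_eq divide_divide_eq_left of_nat_mult of_nat_power)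
  moreover have "\<lfloor>real x / real c / real p ^ (k + 1)\<rfloor> = int (a div p)"
    unfolding a_def
    by (metis floor_divide_of_nat_eq divide_divide_eq_left of_nat_mult of_nat_power
        div_mult2_eq mult.assoc power_Suc2 Suc_eq_plus1)
  ultimately have "digit p k (real x / real c) = int a - int p * int (a div p)"
    by (simp only: digit_eq_floor)
  also have "\<dots> = int (a mod p)"
    by (simp add: zmod_int zdiv_int minus_div_mult_eq_mod [symmetric] mult.commute)
  finally show ?thesis unfolding a_def .
qed

lemma digit_of_nat: "digit p k (real x) = int (x div p ^ k mod p)"
  using digit_of_nat_div[of p k x 1] by simp

lemma prod_lessThan_split:
  fixes p :: "nat \<Rightarrow> 'a::comm_monoid_mult"
  assumes "h < N"
  shows "(\<Prod>i<N. p i) = (\<Prod>m<h. p m) * p h * (\<Prod>n\<in>{h+1..<N}. p n)"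
proof -
  have "(\<Prod>i<N. p i) = (\<Prod>i\<in>{0..<Suc h}. p i) * (\<Prod>n\<in>{Suc h..<N}. p n)"
    using assms prod.atLeastLessThan_concat[of 0 "Suc h" N p] by (simp add: lessThan_atLeast0)
  then show ?thesis by (simp add: lessThan_atLeast0 [symmetric])
qed

lemma mod_prod_eq_sum_mixed_radix_digits:
  fixes z N :: nat and p :: "nat \<Rightarrow> nat"
  shows "z mod (\<Prod>i<N. p i) = (\<Sum>h<N. z div (\<Prod>m<h. p m) mod p h * (\<Prod>m<h. p m))"
proof (induction N)
  case 0
  then show ?case by simp
next
  case (Suc N)
  have "z mod (\<Prod>i<Suc N. p i) = (\<Prod>m<N. p m) * (z div (\<Prod>m<N. p m) mod p N) + z mod (\<Prod>i<N. p i)"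
    by (simp add: mod_mult2_eq)
  with Suc.IH show ?case by simp
qed

theorem mainTheorem1:
  fixes N :: nat and p :: "nat \<Rightarrow> nat" and k :: nat and x :: nat
  assumes "N \<ge> 1"
    and "\<forall>i<N. p i \<ge> 1"
  shows "digit (\<Prod>i<N. p i) k (real x) =
    (\<Sum>h<N. digit (p h) k
        (real x / (real (\<Prod>m<h. p m) ^ (k + 1) * real (\<Prod>n\<in>{h+1..<N}. p n) ^ k))
      * int (\<Prod>j<h. p j))"
proof -
  define P where "P = (\<Prod>i<N. p i)"
  define z where "z = x div P ^ k"
  have term_eq: "digit (p h) k
        (real x / (real (\<Prod>m<h. p m) ^ (k + 1) * real (\<Prod>n\<in>{h+1..<N}. p n) ^ k))
      * int (\<Prod>j<h. p j) = int (z div (\<Prod>m<h. p m) mod p h * (\<Prod>m<h. p m))"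
    if "h < N" for h
  proof -
    define Q R where "Q = (\<Prod>m<h. p m)" and "R = (\<Prod>n\<in>{h+1..<N}. p n)"
    have prod_eq: "Q ^ (k + 1) * R ^ k * p h ^ k = P ^ k * Q"
      unfolding P_def Q_def R_def prod_lessThan_split[OF that]
      by (simp add: power_mult_distrib algebra_simps)
    have "x div (Q ^ (k + 1) * R ^ k * p h ^ k) = z div Q"
      unfolding prod_eq z_def by (rule div_mult2_eq)
    then show ?thesis
      using digit_of_nat_div[of "p h" k x "Q ^ (k + 1) * R ^ k"]
      unfolding Q_def [symmetric] R_def [symmetric] by simp
  qed
  have "digit P k (real x) = int (z mod P)"
    unfolding z_def by (rule digit_of_nat)
  also have "\<dots> = (\<Sum>h<N. int (z div (\<Prod>m<h. p m) mod p h * (\<Prod>m<h. p m)))"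
    unfolding P_def mod_prod_eq_sum_mixed_radix_digits of_nat_sum ..
  also have "\<dots> = (\<Sum>h<N. digit (p h) k
        (real x / (real (\<Prod>m<h. p m) ^ (k + 1) * real (\<Prod>n\<in>{h+1..<N}. p n) ^ k))
      * int (\<Prod>j<h. p j))"
    by (rule sum.cong [OF refl]) (simp only: lessThan_iff term_eq)
  finally show ?thesis
    unfolding P_def .
qed

end
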